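(* Let $A$ be a nonempty finite set of positive integers, let $n$ be a positive integer, let $B$ be a nonempty subset of $A$, and let $\alpha$ be a positive integer with $\alpha\le|B|$. Then: (a) If $\binom{|A|}{\alpha}=\sum_{d=1}^{\sup A}\mu(d)\binom{v(A,d)}{\alpha}$, then $\binom{|B|}{\alpha}=\sum_{d=1}^{\sup B}\mu(d)\binom{v(B,d)}{\alpha}$. (b) If $\binom{|A|}{\alpha}=\sum_{d\mid n}\mu(d)\binom{v(A,d)}{\alpha}$, then $\binom{|B|}{\alpha}=\sum_{d\mid n}\mu(d)\binom{v(B,d)}{\alpha}$. (c) If $\sum_{d=1}^{\sup A}\mu(d)\binom{v(A,d)}{\alpha}=0$, then $\sum_{d=1}^{\sup B}\mu(d)\binom{v(B,d)}{\alpha}=0$. (d) If $\sum_{d\mid n}\mu(d)\binom{v(A,d)}{\alpha}=0$, then $\sum_{d\mid n}\mu(d)\binom{v(B,d)}{\alpha}=0$.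
   Context: For a finite nonempty set $X$ of positive integers, $\sup X$ is its largest element. $\mu$ is the Möbius function. For a positive integer $d$, $v(X,d)$ is the number of multiples of $d$ in $X$. Binomial coefficients $\binom{m}{k}$ are $0$ when $k>m$. *)

theory Defs
  imports "HOL-Computational_Algebra.Computational_Algebra"
begin

definition mobius :: "nat \<Rightarrow> int" where
  "mobius d = (if squarefree d then (-1) ^ card (prime_factors d) else 0)"

definition v :: "nat set \<Rightarrow> nat \<Rightarrow> nat" where
  "v X d = card {x \<in> X. d dvd x}"

end

theory Submission imports Defs begin

text \<open>Writing C(v(X,d), \<alpha>) as the number of \<alpha>-subsets S of X all of whose elements are
  divisible by d, and exchanging the order of summation, the sum becomes
  \<open>\<Sum>\<^sub>S \<Sum>\<^bsub>d | gcd S\<^esub> \<mu>(d)\<close>; by the Moebius identity this counts the \<alpha>-subsets S with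
  gcd S = 1 (for divisors of n: with gcd S coprime to n). So the hypotheses say that every,
  resp. no, \<alpha>-subset of A is relatively prime, and both properties pass to subsets B of A.\<close>

lemma sum_Pow_minus_one_power:
  assumes "finite A"
  shows "(\<Sum>T\<in>Pow A. (-1::int) ^ card T) = (if A = {} then 1 else 0)"
proof -
  have "(\<Sum>T\<in>Pow A. (-1::int) ^ card T) =
      (\<Sum>T\<in>Pow A. (-1) ^ card T * (\<Prod>x\<in>T. 1) * (\<Prod>x\<in>A - T. 1))"
    by simp
  also have "\<dots> = (\<Prod>x\<in>A. 1 - 1)"
    using assms by (rule prod_diff_conv_sum[symmetric])
  finally show ?thesis
    using assms by (simp add: card_gt_0_iff)
qed

lemma prime_factors_prod_primes:
  assumes "finite T" "\<forall>p\<in>T. prime (p::nat)"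
  shows "prime_factors (\<Prod>T) = T"
proof -
  have "prime_factors (prod id T) = \<Union>((prime_factors \<circ> id) ` T)"
    using assms by (intro prime_factors_prod) auto
  also have "\<dots> = T"
    using assms by (auto simp: prime_prime_factors)
  finally show ?thesis by simp
qed

lemma prod_prime_factors_squarefree:
  assumes "squarefree (d::nat)"
  shows "\<Prod>(prime_factors d) = d"
proof -
  have "d \<noteq> 0"
    using assms by (cases "d = 0") auto
  then have "(\<Prod>p\<in>prime_factors d. p ^ multiplicity p d) = d"
    by (simp add: prod_prime_factors)
  moreover have "(\<Prod>p\<in>prime_factors d. p ^ multiplicity p d) = \<Prod>(prime_factors d)"
    using assms \<open>d \<noteq> 0\<close> by (intro prod.cong) (auto simp: squarefree_factorial_semiring')
  ultimately show ?thesis by simp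
qed

lemma bij_betw_prod_squarefree_divisors:
  assumes "m > (0::nat)"
  shows "bij_betw (\<lambda>T. \<Prod>T) (Pow (prime_factors m)) {d. d dvd m \<and> squarefree d}"
proof (rule bij_betwI')
  fix X Y
  assume "X \<in> Pow (prime_factors m)" "Y \<in> Pow (prime_factors m)"
  then have "finite X" "finite Y" "\<forall>p\<in>X. prime p" "\<forall>p\<in>Y. prime p"
    by (auto intro: finite_subset)
  then show "(\<Prod>X = \<Prod>Y) = (X = Y)"
    by (metis prime_factors_prod_primes)
next
  fix X
  assume X: "X \<in> Pow (prime_factors m)"
  have "\<Prod>X dvd \<Prod>(prime_factors m)"
    using X by (intro prod_dvd_prod_subset) auto
  also have "\<dots> dvd (\<Prod>p\<in>prime_factors m. p ^ multiplicity p m)"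
    by (intro prod_dvd_prod) (simp add: dvd_power prime_factors_multiplicity)
  also have "\<dots> = m"
    using assms by (simp add: prod_prime_factors)
  finally have "\<Prod>X dvd m" .
  moreover have "\<forall>p\<in>X. prime p"
    using X by auto
  then have "squarefree (\<Prod>X)"
    by (intro squarefree_prod_coprime) (auto simp: primes_coprime squarefree_prime)
  ultimately show "\<Prod>X \<in> {d. d dvd m \<and> squarefree d}" by simp
next
  fix d
  assume "d \<in> {d. d dvd m \<and> squarefree d}"
  then show "\<exists>X\<in>Pow (prime_factors m). d = \<Prod>X"
    using assms prod_prime_factors_squarefree dvd_prime_factors[of m d]
    by (intro bexI[of _ "prime_factors d"]) auto
qed

lemma sum_mobius_divisors:
  assumes "m > (0::nat)"
  shows "(\<Sum>d\<in>{d. d dvd m}. mobius d) = (if m = 1 then 1 else 0)"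
proof -
  have "(\<Sum>d\<in>{d. d dvd m}. mobius d) = (\<Sum>d\<in>{d. d dvd m \<and> squarefree d}. mobius d)"
    using assms by (intro sum.mono_neutral_right) (auto simp: mobius_def)
  also have "\<dots> = (\<Sum>T\<in>Pow (prime_factors m). mobius (\<Prod>T))"
    using bij_betw_prod_squarefree_divisors[OF assms] by (rule sum.reindex_bij_betw[symmetric])
  also have "\<dots> = (\<Sum>T\<in>Pow (prime_factors m). (-1) ^ card T)"
  proof (intro sum.cong refl)
    fix T
    assume T: "T \<in> Pow (prime_factors m)"
    have "squarefree (\<Prod>T)"
      using bij_betw_apply[OF bij_betw_prod_squarefree_divisors[OF assms] T] by simp
    moreover have "prime_factors (\<Prod>T) = T"
      using T by (intro prime_factors_prod_primes) (auto intro: finite_subset)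
    ultimately show "mobius (\<Prod>T) = (-1) ^ card T"
      by (simp add: mobius_def)
  qed
  also have "\<dots> = (if m = 1 then 1 else 0)"
    using assms by (simp add: sum_Pow_minus_one_power prime_factorization_empty_iff)
  finally show ?thesis .
qed

lemma binomial_multiples_eq_card_subsets:
  assumes "finite X"
  shows "v X d choose k = card {S. S \<subseteq> X \<and> card S = k \<and> d dvd Gcd S}"
proof -
  have "v X d choose k = card {S. S \<subseteq> {x\<in>X. d dvd x} \<and> card S = k}"
    unfolding v_def using assms by (simp add: n_subsets)
  also have "{S. S \<subseteq> {x\<in>X. d dvd x} \<and> card S = k} = {S. S \<subseteq> X \<and> card S = k \<and> d dvd Gcd S}"
    by (auto simp: dvd_Gcd_iff)
  finally show ?thesis .
qed

lemma sum_mobius_binomial_multiples: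
  fixes X D :: "nat set"
  assumes "finite X" "finite D"
  shows "(\<Sum>d\<in>D. mobius d * int (v X d choose k)) =
    (\<Sum>S | S \<subseteq> X \<and> card S = k. \<Sum>d | d \<in> D \<and> d dvd Gcd S. mobius d)"
proof -
  let ?F = "{S. S \<subseteq> X \<and> card S = k}"
  have "(\<Sum>d\<in>D. mobius d * int (v X d choose k)) = (\<Sum>d\<in>D. \<Sum>S | S \<in> ?F \<and> d dvd Gcd S. mobius d)"
    using assms by (simp add: binomial_multiples_eq_card_subsets conj_assoc mult.commute)
  also have "\<dots> = (\<Sum>S\<in>?F. \<Sum>d | d \<in> D \<and> d dvd Gcd S. mobius d)"
    using assms by (intro sum.swap_restrict) auto
  finally show ?thesis by simp
qed

lemma sum_mobius_binomial_multiples_upto_Max: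
  fixes X :: "nat set"
  assumes "finite X" "\<forall>x\<in>X. x > 0" "k > 0"
  shows "(\<Sum>d=1..Max X. mobius d * int (v X d choose k)) =
    int (card {S. S \<subseteq> X \<and> card S = k \<and> Gcd S = 1})"
proof -
  have "(\<Sum>d | d \<in> {1..Max X} \<and> d dvd Gcd S. mobius d) = (if Gcd S = 1 then 1 else 0)"
    if S: "S \<subseteq> X" "card S = k" for S
  proof -
    obtain x where "x \<in> S"
      using S assms by fastforce
    then have "x > 0" "x \<le> Max X" "Gcd S dvd x"
      using S assms by auto
    then have "Gcd S > 0" "Gcd S \<le> Max X"
      by (auto intro: dvd_pos_nat order.trans[OF dvd_imp_le])
    then have "{d. d \<in> {1..Max X} \<and> d dvd Gcd S} = {d. d dvd Gcd S}"
      by (auto intro: dvd_pos_nat order.trans[OF dvd_imp_le])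
    then show ?thesis
      using sum_mobius_divisors[OF \<open>Gcd S > 0\<close>] by simp
  qed
  then have "(\<Sum>d=1..Max X. mobius d * int (v X d choose k)) =
      (\<Sum>S | S \<subseteq> X \<and> card S = k. if Gcd S = 1 then 1 else 0)"
    using assms by (simp add: sum_mobius_binomial_multiples)
  then show ?thesis
    using assms by (simp add: sum.If_cases Int_def conj_assoc)
qed

lemma sum_mobius_binomial_multiples_divisors:
  fixes X :: "nat set"
  assumes "finite X" "n > 0"
  shows "(\<Sum>d\<in>{d. d dvd n}. mobius d * int (v X d choose k)) =
    int (card {S. S \<subseteq> X \<and> card S = k \<and> coprime (Gcd S) n})"
proof -
  have "(\<Sum>d | d \<in> {d. d dvd n} \<and> d dvd Gcd S. mobius d) = (if coprime (Gcd S) n then 1 else 0)"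
    for S
  proof -
    have "{d. d \<in> {d. d dvd n} \<and> d dvd Gcd S} = {d. d dvd gcd (Gcd S) n}"
      by auto
    then show ?thesis
      using sum_mobius_divisors[of "gcd (Gcd S) n"] assms by (simp add: coprime_iff_gcd_eq_1)
  qed
  then have "(\<Sum>d\<in>{d. d dvd n}. mobius d * int (v X d choose k)) =
      (\<Sum>S | S \<subseteq> X \<and> card S = k. if coprime (Gcd S) n then 1 else 0)"
    using assms by (simp add: sum_mobius_binomial_multiples)
  then show ?thesis
    using assms by (simp add: sum.If_cases Int_def conj_assoc)
qed

lemma binomial_eq_card_subsets_filter_iff:
  assumes "finite A"
  shows "card A choose k = card {S. S \<subseteq> A \<and> card S = k \<and> Q S} \<longleftrightarrow>
    (\<forall>S \<subseteq> A. card S = k \<longrightarrow> Q S)"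
proof -
  have "card A choose k = card {S. S \<subseteq> A \<and> card S = k}"
    using assms by (simp add: n_subsets)
  moreover have "card {S. S \<subseteq> A \<and> card S = k \<and> Q S} = card {S. S \<subseteq> A \<and> card S = k}
      \<longleftrightarrow> {S. S \<subseteq> A \<and> card S = k \<and> Q S} = {S. S \<subseteq> A \<and> card S = k}"
    using assms by (intro iffI card_subset_eq) auto
  ultimately show ?thesis by auto
qed

lemma card_subsets_filter_eq_0_iff:
  assumes "finite A"
  shows "card {S. S \<subseteq> A \<and> card S = k \<and> Q S} = 0 \<longleftrightarrow> (\<forall>S \<subseteq> A. card S = k \<longrightarrow> \<not> Q S)"
  using assms by auto

theorem corollary5p4:
  fixes A B :: "nat set" and n \<alpha> :: nat
  assumes "finite A" "A \<noteq> {}" "\<forall>x\<in>A. x > 0" "n > 0"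
    and "B \<subseteq> A" "B \<noteq> {}" "\<alpha> > 0" "\<alpha> \<le> card B"
  shows
   "(int (card A choose \<alpha>) = (\<Sum>d=1..Max A. mobius d * int (v A d choose \<alpha>))
      \<longrightarrow> int (card B choose \<alpha>) = (\<Sum>d=1..Max B. mobius d * int (v B d choose \<alpha>)))
  \<and> (int (card A choose \<alpha>) = (\<Sum>d\<in>{d. d dvd n}. mobius d * int (v A d choose \<alpha>))
      \<longrightarrow> int (card B choose \<alpha>) = (\<Sum>d\<in>{d. d dvd n}. mobius d * int (v B d choose \<alpha>)))
  \<and> ((\<Sum>d=1..Max A. mobius d * int (v A d choose \<alpha>)) = 0
      \<longrightarrow> (\<Sum>d=1..Max B. mobius d * int (v B d choose \<alpha>)) = 0)
  \<and> ((\<Sum>d\<in>{d. d dvd n}. mobius d * int (v A d choose \<alpha>)) = 0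
      \<longrightarrow> (\<Sum>d\<in>{d. d dvd n}. mobius d * int (v B d choose \<alpha>)) = 0)"
proof -
  have "finite B" "\<forall>x\<in>B. x > 0"
    using assms finite_subset by blast+
  note upto_Max = sum_mobius_binomial_multiples_upto_Max[OF assms(1,3,7)]
    sum_mobius_binomial_multiples_upto_Max[OF \<open>finite B\<close> \<open>\<forall>x\<in>B. x > 0\<close> assms(7)]
  note divisors = sum_mobius_binomial_multiples_divisors[OF assms(1,4)]
    sum_mobius_binomial_multiples_divisors[OF \<open>finite B\<close> assms(4)]
  show ?thesis
    unfolding upto_Max divisors of_nat_eq_iff of_nat_eq_0_iff
    unfolding binomial_eq_card_subsets_filter_iff[OF assms(1)]
      binomial_eq_card_subsets_filter_iff[OF \<open>finite B\<close>]
      card_subsets_filter_eq_0_iff[OF assms(1)] card_subsets_filter_eq_0_iff[OF \<open>finite B\<close>]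
    using assms(5) by blast
qed

end
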